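(* Let $G$ be a circle of circumference $1$ and let $\mathbf{x}\in G^n$ be such that the agents are not on one semicircle. Then for every $i\in N$, $\mathrm{cost}(\mathrm{rc}(\mathbf{x}),x_i)\le\frac14$.
   Context: $d(x,y)$ is the length of the shorter arc between $x,y$; $\hat{x}$ is the antipodal point of $x$. $\mathrm{cost}(P,x_i)=\mathbb{E}_{y\sim P}[d(x_i,y)]$. Agents are on one semicircle if all locations lie in some closed arc of length $1/2$. RC (Random Center) mechanism: the antipodal points $\hat{x}_1,\dots,\hat{x}_n$ partition $G$ into arcs between cyclically consecutive antipodal points; $\mathrm{rc}(\mathbf{x})$ returns the midpoint of each such arc with probability equal to its length (equivalently: pick $y$ uniformly on $G$ and return the midpoint of the arc containing $y$). *)

theory Defs
  imports "HOL-Analysis.Analysis"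
begin

text \<open>The circle G of circumference 1 is represented by the reals modulo 1:
  a real number t stands for the point t mod 1. All notions below are
  invariant under integer shifts of their arguments.\<close>

definition cdist :: "real \<Rightarrow> real \<Rightarrow> real" where
  "cdist x y = min (frac (x - y)) (frac (y - x))"

definition antipode :: "real \<Rightarrow> real" where
  "antipode x = x + 1/2"

definition on_semicircle :: "nat \<Rightarrow> (nat \<Rightarrow> real) \<Rightarrow> bool" where
  "on_semicircle n x \<longleftrightarrow> (\<exists>a. \<forall>j<n. frac (x j - a) \<le> 1/2)"

text \<open>Outcome of RC for the uniform sample y: the midpoint of the arc between
  cyclically consecutive antipodal points containing y. l is the
  counterclockwise-backward distance from y to the previous antipodal point,
  r the forward distance to the next one; the midpoint is y + (r - l)/2.\<close>
definition rc_point :: "nat \<Rightarrow> (nat \<Rightarrow> real) \<Rightarrow> real \<Rightarrow> real" where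
  "rc_point n x y =
     (let l = Min {frac (y - antipode (x j)) | j. j < n};
          r = Min {frac (antipode (x j) - y) | j. j < n}
      in y + (r - l) / 2)"

definition rc :: "nat \<Rightarrow> (nat \<Rightarrow> real) \<Rightarrow> real measure" where
  "rc n x = distr (uniform_measure lborel {0..<1}) borel (rc_point n x)"

definition cost :: "real measure \<Rightarrow> real \<Rightarrow> real" where
  "cost P p = (\<integral>y. cdist p y \<partial>P)"

end

theory Submission
  imports Defs
begin

(* Fix an agent i and measure positions on the circle relative to
   the antipode c = x i + 1/2, so that a point c + t (0 <= t < 1) has distance
   |t - 1/2| from x i.  The antipodal points become a finite set B of cut
   points in [0,1) containing 0, and RC maps the uniform sample t to the
   midpoint of the cell [b, b'] of this partition of [0,1] that contains t.
   Hence cost(rc x, x i) is the integral over [0,1] of |mid(t) - 1/2|.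
   On every cell, |mid - 1/2| is at most the average of the convex function
   |t - 1/2| over the cell (midpoint inequality); summing over the cells gives
   cost <= integral of |t - 1/2| over [0,1] = 1/4. *)

section \<open>The cost of RC as an integral over the unit interval\<close>

lemma frac_borel_measurable[measurable]: "(\<lambda>x::real. frac x) \<in> borel_measurable borel"
  unfolding frac_def by measurable

lemma Collect_less_eq_image: "{f j | j. j < (n::nat)} = f ` {..<n}"
  by auto

lemma rc_point_borel_measurable[measurable]: "rc_point n x \<in> borel_measurable borel"
  unfolding rc_point_def Let_def Collect_less_eq_image by measurable

lemma cdist_borel_measurable[measurable]:
  assumes [measurable]: "g \<in> borel_measurable borel"
  shows "(\<lambda>y. cdist p (g y)) \<in> borel_measurable borel"
  unfolding cdist_def by measurable

lemma cdist_bounds: "0 \<le> cdist p y" "cdist p y \<le> 1"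
  unfolding cdist_def by (auto simp: frac_lt_1 min_def intro: less_imp_le)

lemma cost_rc_eq_integral:
  "cost (rc n x) p = integral {0..1} (\<lambda>y. cdist p (rc_point n x y))"
proof -
  let ?F = "\<lambda>y. cdist p (rc_point n x y)"
  have uniform: "uniform_measure lborel {0..<1::real}
      = density lborel (\<lambda>y. ennreal (indicator {0..<1} y))"
    unfolding uniform_measure_def by (simp add: ennreal_indicator divide_ennreal_def)
  have "cost (rc n x) p = integral\<^sup>L (uniform_measure lborel {0..<1}) ?F"
    unfolding cost_def rc_def by (subst integral_distr) auto
  also have "\<dots> = (LINT y:{0..<1}|lborel. ?F y)"
    unfolding uniform by (subst integral_density) (auto simp: set_lebesgue_integral_def)
  also have "\<dots> = integral {0..<1} ?F"
  proof (rule set_borel_integral_eq_integral)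
    show "set_integrable lborel {0..<1} ?F"
      unfolding set_integrable_def
      by (rule integrableI_bounded_set_indicator[where B=1]) (auto simp: cdist_bounds)
  qed
  also have "\<dots> = integral {0..1} ?F"
    by (rule integral_spike_set) (auto intro: negligible_subset[of "{1}"])
  finally show ?thesis .
qed

section \<open>Cell midpoints of a finite partition of an interval\<close>

text \<open>A finite set B of cut points partitions [a,b] into cells. For t in [a,b],
  the cell containing t is [cut_below a B t, cut_above b B t].\<close>
definition cut_below :: "real \<Rightarrow> real set \<Rightarrow> real \<Rightarrow> real" where
  "cut_below a B t = Max (insert a {s\<in>B. s \<le> t})"

definition cut_above :: "real \<Rightarrow> real set \<Rightarrow> real \<Rightarrow> real" where
  "cut_above b B t = Min (insert b {s\<in>B. t \<le> s})"

definition cell_mid :: "real \<Rightarrow> real \<Rightarrow> real set \<Rightarrow> real \<Rightarrow> real" where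
  "cell_mid a b B t = (cut_below a B t + cut_above b B t) / 2"

lemma cell_mid_before_first_cut:
  assumes "finite B" "b0 \<in> B" "\<And>s. s \<in> B \<Longrightarrow> b0 \<le> s" "a \<le> b0" "b0 \<le> b" "t < b0"
  shows "cell_mid a b B t = (a + b0) / 2"
proof -
  have "{s\<in>B. s \<le> t} = {}" using assms(3,6) by force
  then have "cut_below a B t = a" unfolding cut_below_def by (metis Max_singleton)
  moreover have "cut_above b B t = b0"
    unfolding cut_above_def using assms by (intro Min_eqI) force+
  ultimately show ?thesis by (simp add: cell_mid_def)
qed

lemma cell_mid_after_first_cut:
  assumes "finite B" "b0 \<in> B" "a \<le> b0" "b0 < t"
  shows "cell_mid a b B t = cell_mid b0 b (B - {b0}) t"
proof -
  have "{s\<in>B. s \<le> t} = insert b0 {s\<in>B - {b0}. s \<le> t}" using assms by auto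
  then have "cut_below a B t = max a (Max (insert b0 {s\<in>B - {b0}. s \<le> t}))"
    using assms(1) by (simp add: cut_below_def)
  moreover have "b0 \<le> Max (insert b0 {s\<in>B - {b0}. s \<le> t})"
    using assms(1) by (intro Max_ge) auto
  ultimately have "cut_below a B t = cut_below b0 (B - {b0}) t"
    using assms(3) unfolding cut_below_def by (simp add: max_def)
  moreover have "{s\<in>B. t \<le> s} = {s\<in>B - {b0}. t \<le> s}" using assms(4) by auto
  then have "cut_above b B t = cut_above b (B - {b0}) t" by (simp add: cut_above_def)
  ultimately show ?thesis by (simp add: cell_mid_def)
qed

section \<open>Replacing a function by its values at cell midpoints\<close>

text \<open>Induction on the number of cut points,
  splitting off the leftmost cell.\<close>
lemma cell_mid_integral_le:
  fixes g :: "real \<Rightarrow> real"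
  assumes integrable: "\<And>a b. g integrable_on {a..b}"
    and midpoint: "\<And>a b. a \<le> b \<Longrightarrow> (b - a) * g ((a + b) / 2) \<le> integral {a..b} g"
    and "finite B" "B \<subseteq> {a..<b}" "a \<le> b"
  shows "\<exists>I. ((\<lambda>t. g (cell_mid a b B t)) has_integral I) {a..b} \<and> I \<le> integral {a..b} g"
  using assms(3-)
proof (induction "card B" arbitrary: a B rule: less_induct)
  case less
  show ?case
  proof (cases "B = {}")
    case True
    then have "((\<lambda>t. g (cell_mid a b B t)) has_integral (b - a) * g ((a + b) / 2)) {a..b}"
      using has_integral_const_real[of "g ((a + b) / 2)" a b] less.prems(3)
      by (simp add: cell_mid_def cut_below_def cut_above_def)
    then show ?thesis using midpoint[OF less.prems(3)] by auto
  next
    case False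
    define b0 where "b0 = Min B"
    define B' where "B' = B - {b0}"
    have b0: "b0 \<in> B" "\<And>s. s \<in> B \<Longrightarrow> b0 \<le> s"
      using False less.prems(1) by (simp_all add: b0_def)
    have ab0: "a \<le> b0" "b0 < b" using b0(1) less.prems(2) by auto
    have "card B' < card B"
      unfolding B'_def using card_Diff1_less[OF less.prems(1) b0(1)] .
    moreover have "finite B'" "B' \<subseteq> {b0..<b}"
      using b0 less.prems(1,2) by (auto simp: B'_def)
    ultimately obtain I2 where I2: "((\<lambda>t. g (cell_mid b0 b B' t)) has_integral I2) {b0..b}"
      "I2 \<le> integral {b0..b} g"
      using less.hyps ab0(2) by force
    have right: "((\<lambda>t. g (cell_mid a b B t)) has_integral I2) {b0..b}"
      by (rule has_integral_spike_finite[OF _ _ I2(1), of "{b0}"])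
         (use cell_mid_after_first_cut[OF less.prems(1) b0(1) ab0(1)] in \<open>auto simp: B'_def\<close>)
    have left: "((\<lambda>t. g (cell_mid a b B t)) has_integral (b0 - a) * g ((a + b0) / 2)) {a..b0}"
    proof (rule has_integral_spike_finite[of "{b0}" _ _ "\<lambda>_. g ((a + b0) / 2)"])
      show "((\<lambda>_. g ((a + b0) / 2)) has_integral (b0 - a) * g ((a + b0) / 2)) {a..b0}"
        using has_integral_const_real[of "g ((a + b0) / 2)" a b0] ab0 by simp
      fix t assume "t \<in> {a..b0} - {b0}"
      then have "t < b0" by simp
      then show "g (cell_mid a b B t) = g ((a + b0) / 2)"
        by (simp only: cell_mid_before_first_cut[OF less.prems(1) b0 ab0(1) less_imp_le[OF ab0(2)]])
    qed simp
    have "integral {a..b0} g + integral {b0..b} g = integral {a..b} g"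
      using ab0 integrable by (intro Henstock_Kurzweil_Integration.integral_combine) auto
    then have "(b0 - a) * g ((a + b0) / 2) + I2 \<le> integral {a..b} g"
      using midpoint[OF ab0(1)] I2(2) by linarith
    moreover have "((\<lambda>t. g (cell_mid a b B t)) has_integral ((b0 - a) * g ((a + b0) / 2) + I2)) {a..b}"
      using has_integral_combine[OF _ _ left right] ab0 by auto
    ultimately show ?thesis by blast
  qed
qed

lemma affine_has_integral:
  fixes a b s m c :: real
  assumes "a \<le> b"
  shows "((\<lambda>t. s * (t - m) + c) has_integral
           ((s * (b - m)^2/2 + c * b) - (s * (a - m)^2/2 + c * a))) {a..b}"
proof -
  have "((\<lambda>t. s * (t - m)^2/2 + c * t) has_vector_derivative (s * (u - m) + c)) (at u within {a..b})"
    for u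
    by (auto intro!: derivative_eq_intros simp: field_simps has_real_derivative_iff_has_vector_derivative[symmetric])
  from fundamental_theorem_of_calculus[OF assms this] show ?thesis by simp
qed

text \<open>The midpoint inequality for |t - p|: it lies above its tangent line at the
  midpoint, and the tangent line integrates to length times midpoint value.\<close>
lemma abs_dist_midpoint_le_integral:
  fixes a b p :: real
  assumes "a \<le> b"
  shows "(b - a) * \<bar>(a + b) / 2 - p\<bar> \<le> integral {a..b} (\<lambda>t. \<bar>t - p\<bar>)"
proof -
  define m where "m = (a + b) / 2"
  define s :: real where "s = (if m \<ge> p then 1 else -1)"
  define c where "c = \<bar>m - p\<bar>"
  have "integral {a..b} (\<lambda>t. s * (t - m) + c) \<le> integral {a..b} (\<lambda>t. \<bar>t - p\<bar>)"
    using affine_has_integral[OF assms]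
    by (intro integral_le has_integral_integrable integrable_continuous_real continuous_intros)
       (auto simp: s_def c_def)
  moreover have "integral {a..b} (\<lambda>t. s * (t - m) + c) = (b - a) * c"
    using integral_unique[OF affine_has_integral[OF assms, of s m c]]
    by (simp add: m_def power2_eq_square algebra_simps divide_simps)
  ultimately show ?thesis by (simp add: m_def c_def)
qed

lemma integral_abs_minus_half: "integral {0..1} (\<lambda>t::real. \<bar>t - 1/2\<bar>) = 1/4"
proof -
  have "((\<lambda>t::real. -1 * (t - 1/2) + 0) has_integral 1/8) {0..1/2}"
    using affine_has_integral[of 0 "1/2" "-1" "1/2" 0] by (simp add: power2_eq_square)
  then have left: "((\<lambda>t::real. \<bar>t - 1/2\<bar>) has_integral 1/8) {0..1/2}"
    by (rule has_integral_eq[rotated]) auto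
  have "((\<lambda>t::real. 1 * (t - 1/2) + 0) has_integral 1/8) {1/2..1}"
    using affine_has_integral[of "1/2" 1 1 "1/2" 0] by (simp add: power2_eq_square)
  then have right: "((\<lambda>t::real. \<bar>t - 1/2\<bar>) has_integral 1/8) {1/2..1}"
    by (rule has_integral_eq[rotated]) auto
  have "((\<lambda>t::real. \<bar>t - 1/2\<bar>) has_integral (1/8 + 1/8)) {0..1}"
    by (rule has_integral_combine[OF _ _ left right]) auto
  then show ?thesis by (simp add: integral_unique)
qed

lemma cell_mid_distance_integral_le_quarter:
  assumes "finite B" "B \<subseteq> {0..<1}"
  shows "\<exists>I. ((\<lambda>t. \<bar>cell_mid 0 1 B t - 1/2\<bar>) has_integral I) {0..1} \<and> I \<le> 1/4"
  using cell_mid_integral_le[of "\<lambda>t. \<bar>t - 1/2\<bar>", OF _ abs_dist_midpoint_le_integral assms]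
    integral_abs_minus_half
  by (force intro: integrable_continuous_real continuous_intros)

section \<open>Rotation invariance of integrals of 1-periodic functions\<close>

lemma frac_diff_unit_interval:
  fixes t b :: real
  assumes "0 \<le> t" "t < 1" "0 \<le> b" "b < 1"
  shows "frac (t - b) = (if b \<le> t then t - b else t - b + 1)"
  using assms by (auto simp: frac_eq frac_unique_iff algebra_simps)

text \<open>Integrating H (frac (y - c)) over [0,1] splits at the point where
  frac (y - c) wraps around; each piece is a translate of part of [0,1].\<close>
lemma has_integral_frac_shift:
  fixes H :: "real \<Rightarrow> real"
  assumes H: "(H has_integral I) {0..1}"
  shows "((\<lambda>y. H (frac (y - c))) has_integral I) {0..1}"
proof -
  define d where "d = frac c"
  have d: "0 \<le> d" "d < 1" by (auto simp: d_def frac_lt_1)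
  have shift: "frac (y - c) = frac (y - d)" for y by (simp add: d_def frac_diff_simp)
  have Hi: "H integrable_on {0..1}" using H by blast
  have split: "integral {0..1-d} H + integral {1-d..1} H = I"
    using Henstock_Kurzweil_Integration.integral_combine[OF _ _ Hi, of "1-d"] d H
    by (simp add: integral_unique)
  have "((H \<circ> (+) (1-d)) has_integral integral {1-d..1} H) {0..d}"
    using has_integral_shift_Icc_real[of H "1-d" _ 0 d] integrable_subinterval_real[OF Hi, of "1-d" 1] d
    by (auto intro: integrable_integral)
  then have wrapped: "((\<lambda>y. H (frac (y - c))) has_integral integral {1-d..1} H) {0..d}"
    by (rule has_integral_spike_finite[of "{d}", rotated 2])
       (use d frac_diff_unit_interval[of _ d] in \<open>auto simp: shift algebra_simps\<close>)
  have "((H \<circ> (+) (-d)) has_integral integral {0..1-d} H) {d..1}"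
    using has_integral_shift_Icc_real[of H "-d" _ d 1] integrable_subinterval_real[OF Hi, of 0 "1-d"] d
    by (auto intro: integrable_integral)
  then have straight: "((\<lambda>y. H (frac (y - c))) has_integral integral {0..1-d} H) {d..1}"
    by (rule has_integral_spike_finite[of "{1}", rotated 2])
       (use d frac_diff_unit_interval[of _ d] in \<open>auto simp: shift\<close>)
  have "((\<lambda>y. H (frac (y - c))) has_integral (integral {1-d..1} H + integral {0..1-d} H)) {0..1}"
    by (rule has_integral_combine[OF _ _ wrapped straight]) (use d in auto)
  then show ?thesis using split by (simp add: add.commute)
qed

section \<open>The RC outcome in coordinates centred at an antipode\<close>

lemma cut_below_props:
  assumes "finite B" "0 \<in> B" "0 \<le> t"
  shows "cut_below 0 B t \<in> B" "cut_below 0 B t \<le> t" "0 \<le> cut_below 0 B t"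
    "\<And>s. s \<in> B \<Longrightarrow> s \<le> t \<Longrightarrow> s \<le> cut_below 0 B t"
proof -
  have fin: "finite (insert 0 {s\<in>B. s \<le> t})" using assms(1) by auto
  have "cut_below 0 B t \<in> insert 0 {s\<in>B. s \<le> t}"
    unfolding cut_below_def by (rule Max_in[OF fin]) auto
  then show "cut_below 0 B t \<in> B" "cut_below 0 B t \<le> t" using assms by auto
  show "0 \<le> cut_below 0 B t" "\<And>s. s \<in> B \<Longrightarrow> s \<le> t \<Longrightarrow> s \<le> cut_below 0 B t"
    unfolding cut_below_def by (rule Max_ge[OF fin], simp)+
qed

text \<open>Either the next cut point is in B, or t lies in the last cell and the
  next cut point is 1, the (wrapped-around) copy of 0.\<close>
lemma cut_above_props:
  assumes "finite B" "0 \<in> B" "B \<subseteq> {0..<1}" "0 \<le> t" "t < 1"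
  shows "(cut_above 1 B t \<in> B \<and> t \<le> cut_above 1 B t) \<or> (cut_above 1 B t = 1 \<and> 0 < t)"
    "cut_above 1 B t \<le> 1" "t \<le> cut_above 1 B t"
    "\<And>s. s \<in> B \<Longrightarrow> t \<le> s \<Longrightarrow> cut_above 1 B t \<le> s"
proof -
  have fin: "finite (insert 1 {s\<in>B. t \<le> s})" using assms(1) by auto
  have "cut_above 1 B t \<in> insert 1 {s\<in>B. t \<le> s}"
    unfolding cut_above_def by (rule Min_in[OF fin]) auto
  moreover have "t = 0 \<Longrightarrow> cut_above 1 B t \<le> 0"
    unfolding cut_above_def using assms(2) by (intro Min_le[OF fin]) auto
  ultimately show "(cut_above 1 B t \<in> B \<and> t \<le> cut_above 1 B t) \<or> (cut_above 1 B t = 1 \<and> 0 < t)"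
    using assms by force
  show "cut_above 1 B t \<le> 1" "\<And>s. s \<in> B \<Longrightarrow> t \<le> s \<Longrightarrow> cut_above 1 B t \<le> s"
    unfolding cut_above_def by (rule Min_le[OF fin], simp)+
  show "t \<le> cut_above 1 B t" unfolding cut_above_def using fin assms(5) by (auto intro!: Min.boundedI)
qed

lemma Min_frac_backward:
  assumes "finite B" "0 \<in> B" "B \<subseteq> {0..<1}" "0 \<le> t" "t < 1"
  shows "Min ((\<lambda>s. frac (t - s)) ` B) = t - cut_below 0 B t"
proof (rule Min_eqI)
  note P = cut_below_props[OF assms(1,2,4)]
  show "finite ((\<lambda>s. frac (t - s)) ` B)" using assms(1) by auto
  have "cut_below 0 B t \<in> {0..<1}" using P(1) assms(3) by auto
  then show "t - cut_below 0 B t \<in> (\<lambda>s. frac (t - s)) ` B"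
    using P(1,2) frac_diff_unit_interval[of t "cut_below 0 B t"] assms
    by (intro image_eqI[of _ _ "cut_below 0 B t"]) auto
  fix y assume "y \<in> (\<lambda>s. frac (t - s)) ` B"
  then obtain s where s: "s \<in> B" "y = frac (t - s)" by auto
  then have "s \<in> {0..<1}" using assms(3) by auto
  then show "t - cut_below 0 B t \<le> y"
    using s frac_diff_unit_interval[of t s] assms P(3) P(4)[of s] by (auto split: if_splits)
qed

lemma Min_frac_forward:
  assumes "finite B" "0 \<in> B" "B \<subseteq> {0..<1}" "0 \<le> t" "t < 1"
  shows "Min ((\<lambda>s. frac (s - t)) ` B) = cut_above 1 B t - t"
proof (rule Min_eqI)
  note Q = cut_above_props[OF assms]
  show "finite ((\<lambda>s. frac (s - t)) ` B)" using assms(1) by auto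
  show "cut_above 1 B t - t \<in> (\<lambda>s. frac (s - t)) ` B"
    using Q(1)
  proof
    assume q: "cut_above 1 B t \<in> B \<and> t \<le> cut_above 1 B t"
    then have "cut_above 1 B t < 1" using assms(3) by auto
    then show ?thesis using q assms by (intro image_eqI[of _ _ "cut_above 1 B t"]) (auto simp: frac_eq)
  next
    assume "cut_above 1 B t = 1 \<and> 0 < t"
    then show ?thesis using assms frac_diff_unit_interval[of 0 t] by (intro image_eqI[of _ _ 0]) auto
  qed
  fix y assume "y \<in> (\<lambda>s. frac (s - t)) ` B"
  then obtain s where s: "s \<in> B" "y = frac (s - t)" by auto
  then have "s \<in> {0..<1}" using assms(3) by auto
  then show "cut_above 1 B t - t \<le> y"
    using s frac_diff_unit_interval[of s t] assms Q(2) Q(4)[of s] by (auto split: if_splits)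
qed

lemma min_frac_small:
  fixes w :: real
  assumes "\<bar>w\<bar> \<le> 1/2"
  shows "min (frac w) (frac (- w)) = \<bar>w\<bar>"
proof -
  have nonneg: "min (frac v) (frac (- v)) = v" if "0 \<le> v" "v \<le> 1/2" for v :: real
  proof -
    have "frac v = v" using that by (simp add: frac_eq)
    moreover from this have "v \<in> \<int> \<Longrightarrow> v = 0" by (metis frac_eq_0_iff)
    ultimately show ?thesis using that frac_neg[of v] by (auto simp: min_def)
  qed
  show ?thesis
    using nonneg[of w] nonneg[of "- w"] assms by (cases "0 \<le> w") (auto simp: min.commute)
qed

lemma cdist_from_antipode_offset:
  fixes c m :: real and k :: int
  assumes "0 \<le> m" "m \<le> 1"
  shows "cdist (c - 1/2) (c + of_int k + m) = \<bar>m - 1/2\<bar>"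
proof -
  have forward: "c + of_int k + m - (c - 1/2) = (m - 1/2) + of_int (k + 1)"
    and backward: "c - 1/2 - (c + of_int k + m) = - (m - 1/2) + of_int (- k - 1)"
    by simp_all
  have "\<bar>m - 1/2\<bar> \<le> 1/2" using assms by (simp add: abs_if)
  from min_frac_small[OF this] show ?thesis
    unfolding cdist_def forward backward frac_add_of_int_right by (simp add: min.commute)
qed

lemma frac_diff_frac: "frac (frac u - frac v) = frac (u - v)" for u v :: real
  by (metis frac_diff_simp frac_add_simps(1) diff_conv_add_uminus)

text \<open>The antipodal points, rotated so that the antipode c of agent i is at 0.\<close>
definition rotated_cuts :: "nat \<Rightarrow> (nat \<Rightarrow> real) \<Rightarrow> real \<Rightarrow> real set" where
  "rotated_cuts n x c = (\<lambda>j. frac (antipode (x j) - c)) ` {..<n}"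

lemma rotated_cuts_props:
  assumes "i < n"
  shows "finite (rotated_cuts n x (x i + 1/2))" "0 \<in> rotated_cuts n x (x i + 1/2)"
    "rotated_cuts n x (x i + 1/2) \<subseteq> {0..<1}"
  using assms by (auto simp: rotated_cuts_def antipode_def frac_lt_1 intro!: image_eqI[of _ _ i])

lemma cdist_rc_point:
  fixes x :: "nat \<Rightarrow> real" and i n :: nat
  assumes "i < n"
  defines "c \<equiv> x i + 1/2"
  shows "cdist (x i) (rc_point n x y) = \<bar>cell_mid 0 1 (rotated_cuts n x c) (frac (y - c)) - 1/2\<bar>"
proof -
  define B where "B = rotated_cuts n x c"
  define t where "t = frac (y - c)"
  have t: "0 \<le> t" "t < 1" by (auto simp: t_def frac_lt_1)
  note cuts = rotated_cuts_props[OF assms(1), of x, folded c_def, folded B_def]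
  have backward: "{frac (y - antipode (x j)) | j. j < n} = (\<lambda>s. frac (t - s)) ` B"
    and forward: "{frac (antipode (x j) - y) | j. j < n} = (\<lambda>s. frac (s - t)) ` B"
    unfolding Collect_less_eq_image B_def rotated_cuts_def image_image t_def frac_diff_frac
    by simp_all
  have y: "y = c + of_int \<lfloor>y - c\<rfloor> + t" unfolding t_def frac_def by simp
  have "rc_point n x y = c + of_int \<lfloor>y - c\<rfloor> + cell_mid 0 1 B t"
    unfolding rc_point_def Let_def backward forward cell_mid_def
      Min_frac_backward[OF cuts t] Min_frac_forward[OF cuts t]
    by (subst (1) y) (simp add: field_simps)
  moreover have "0 \<le> cell_mid 0 1 B t" "cell_mid 0 1 B t \<le> 1"
    using cut_below_props[OF cuts(1,2) t(1)] cut_above_props[OF cuts t] by (auto simp: cell_mid_def)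
  moreover have "x i = c - 1/2" by (simp add: c_def)
  ultimately show ?thesis
    using cdist_from_antipode_offset by (simp add: B_def t_def)
qed

theorem mainTheorem13:
  fixes n :: nat and x :: "nat \<Rightarrow> real"
  assumes "\<not> on_semicircle n x"
  shows "\<forall>i<n. cost (rc n x) (x i) \<le> 1/4"
proof (intro allI impI)
  fix i assume i: "i < n"
  define c where "c = x i + 1/2"
  define B where "B = rotated_cuts n x c"
  obtain I where I: "((\<lambda>t. \<bar>cell_mid 0 1 B t - 1/2\<bar>) has_integral I) {0..1}" "I \<le> 1/4"
    using cell_mid_distance_integral_le_quarter rotated_cuts_props[OF i, of x]
    unfolding B_def c_def by blast
  have "((\<lambda>y. \<bar>cell_mid 0 1 B (frac (y - c)) - 1/2\<bar>) has_integral I) {0..1}"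
    using has_integral_frac_shift[OF I(1)] by simp
  also have "(\<lambda>y. \<bar>cell_mid 0 1 B (frac (y - c)) - 1/2\<bar>) = (\<lambda>y. cdist (x i) (rc_point n x y))"
    using cdist_rc_point[OF i, of x] unfolding B_def c_def by simp
  finally have "integral {0..1} (\<lambda>y. cdist (x i) (rc_point n x y)) = I"
    by (rule integral_unique)
  then show "cost (rc n x) (x i) \<le> 1/4"
    using cost_rc_eq_integral I(2) by simp
qed

end
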